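(* Let $k\ge2$, let $U\subseteq\mathbb{R}^d$ be a set of $k$ distinct points, and let $V\subseteq U$ with $|V|\ge2$. Then $L_2'(V)\ge L_2(V)/2$.
   Context: For $V$: for each dimension $i$ let $\mathcal{I}_i$ be the consecutive intervals $[a,b]$ ($a<b$) into which $[\min_{v\in V}v_i,\max_{v\in V}v_i]$ is partitioned by the projections $\{v_i:v\in V\}$; $\mathcal{I}_{\mathrm{all}}(V)=\{(i,[a,b]):[a,b]\in\mathcal{I}_i\}$ and $L_2(V)=\sum_{(i,[a,b])\in\mathcal{I}_{\mathrm{all}}(V)}(b-a)^2$. Let $\Delta(V)=\max_{x,y\in V}\|x-y\|_2^2$. A pair $x,y\in V$ is close if $\|x-y\|_2^2<\Delta(V)/k^4$. Let $R(V)\subseteq\mathcal{I}_{\mathrm{all}}(V)$ be the set of $(i,[a,b])$ such that $[a,b]\subseteq[\min(x_i,y_i),\max(x_i,y_i)]$ for some close pair $x,y\in V$, and $L_2'(V)=\sum_{(i,[a,b])\in\mathcal{I}_{\mathrm{all}}(V)\setminus R(V)}(b-a)^2$. *)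

theory Defs
  imports "HOL-Analysis.Analysis"
begin

text \<open>Points of R^d are vectors of type real^'d (coordinates x$i, i ranging over the
finite index type 'd). An interval [a,b] is represented by the pair (a,b).\<close>

definition proj :: "(real^'d) set \<Rightarrow> 'd \<Rightarrow> real set" where
  "proj V i = (\<lambda>v. v $ i) ` V"

definition intervals_all :: "(real^'d) set \<Rightarrow> ('d \<times> (real \<times> real)) set" where
  "intervals_all V = {(i, (a, b)) | i a b. a \<in> proj V i \<and> b \<in> proj V i \<and> a < b \<and>
      (\<forall>c\<in>proj V i. \<not> (a < c \<and> c < b))}"

definition L2 :: "(real^'d) set \<Rightarrow> real" where
  "L2 V = (\<Sum>(i, (a, b)) \<in> intervals_all V. (b - a)^2)"

definition Delta :: "(real^'d) set \<Rightarrow> real" where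
  "Delta V = Max {(norm (x - y))^2 | x y. x \<in> V \<and> y \<in> V}"

definition close_pair :: "nat \<Rightarrow> (real^'d) set \<Rightarrow> real^'d \<Rightarrow> real^'d \<Rightarrow> bool" where
  "close_pair k V x y \<longleftrightarrow> x \<in> V \<and> y \<in> V \<and> (norm (x - y))^2 < Delta V / (real k)^4"

definition removed :: "nat \<Rightarrow> (real^'d) set \<Rightarrow> ('d \<times> (real \<times> real)) set" where
  "removed k V = {(i, (a, b)) \<in> intervals_all V. \<exists>x y. close_pair k V x y \<and>
      min (x $ i) (y $ i) \<le> a \<and> b \<le> max (x $ i) (y $ i)}"

definition L2' :: "nat \<Rightarrow> (real^'d) set \<Rightarrow> real" where
  "L2' k V = (\<Sum>(i, (a, b)) \<in> intervals_all V - removed k V. (b - a)^2)"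

end

theory Submission
  imports Defs
begin

(* Along one
   coordinate, the gaps between two points x and y have lengths summing to |x_i - y_i|, so the
   squares of the gaps spanned by a pair weigh at most |x - y|^2; summing over the at most k^2
   close pairs, the removed weight is below k^2 Delta(V) / k^4. On the other hand, by Cauchy-Schwarz
   over the at most k - 1 gaps between the two coordinates of a diameter pair,
   Delta(V) <= (k - 1) L_2(V). Hence the removed weight is at most (k - 1) / k^2 L_2(V), which
   is at most L_2(V) / 2. *)

lemma sum_squares_le_square_sum:
  fixes f :: "'a \<Rightarrow> 'b::linordered_idom"
  assumes "\<And>x. x \<in> A \<Longrightarrow> 0 \<le> f x"
  shows "(\<Sum>x\<in>A. (f x)^2) \<le> (\<Sum>x\<in>A. f x)^2"
proof (cases "finite A")
  case True
  have "(\<Sum>x\<in>A. (f x)^2) \<le> (\<Sum>x\<in>A. f x * (\<Sum>y\<in>A. f y))"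
    unfolding power2_eq_square using True assms by (intro sum_mono mult_left_mono member_le_sum) auto
  also have "\<dots> = (\<Sum>x\<in>A. f x)^2"
    by (simp add: power2_eq_square sum_distrib_right)
  finally show ?thesis .
qed simp

lemma sum_UN_le:
  fixes f :: "'b \<Rightarrow> 'c::ordered_ab_group_add"
  assumes "finite I" "\<And>i. i \<in> I \<Longrightarrow> finite (A i)" "\<And>x. 0 \<le> f x"
  shows "sum f (\<Union>i\<in>I. A i) \<le> (\<Sum>i\<in>I. sum f (A i))"
  using assms
proof (induction I rule: finite_induct)
  case (insert j I)
  have "sum f (A j \<union> (\<Union>i\<in>I. A i)) \<le> sum f (A j) + sum f (\<Union>i\<in>I. A i)"
    using insert by (subst sum_Un) (auto intro: sum_nonneg)
  also have "\<dots> \<le> sum f (A j) + (\<Sum>i\<in>I. sum f (A i))"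
    using insert by (intro add_left_mono) auto
  finally show ?case using insert by simp
qed simp

lemma power2_norm_vec: "(norm (x :: real^'n))^2 = (\<Sum>i\<in>UNIV. (x $ i)^2)"
  unfolding power2_norm_eq_inner inner_vec_def by (simp add: power2_eq_square)

definition gaps :: "real set \<Rightarrow> (real \<times> real) set" where
  "gaps P = {(a, b). a \<in> P \<and> b \<in> P \<and> a < b \<and> (\<forall>c\<in>P. \<not> (a < c \<and> c < b))}"

definition gaps_within :: "real set \<Rightarrow> real \<Rightarrow> real \<Rightarrow> (real \<times> real) set" where
  "gaps_within P u w = {(a, b) \<in> gaps P. u \<le> a \<and> b \<le> w}"

lemma finite_gaps: "finite P \<Longrightarrow> finite (gaps P)"
  by (rule finite_subset[of _ "P \<times> P"]) (auto simp: gaps_def)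

lemma finite_gaps_within: "finite P \<Longrightarrow> finite (gaps_within P u w)"
  by (rule finite_subset[OF _ finite_gaps]) (auto simp: gaps_within_def)

lemma gaps_same_left_end: "(a, b) \<in> gaps P \<Longrightarrow> (a, b') \<in> gaps P \<Longrightarrow> b = b'"
  unfolding gaps_def by (auto, meson linorder_neqE_linordered_idom)

lemma inj_on_fst_gaps: "inj_on fst (gaps P)"
  by (auto simp: inj_on_def intro: gaps_same_left_end)

lemma obtain_next_gap:
  assumes "finite P" "u \<in> P" "w \<in> P" "u < w"
  obtains c where "(u, c) \<in> gaps P" "c \<le> w"
proof -
  define c where "c = Min {c \<in> P. u < c}"
  have "w \<in> {c \<in> P. u < c}" "finite {c \<in> P. u < c}"
    using assms by auto
  then have "c \<in> {c \<in> P. u < c}" and "\<forall>d \<in> {c \<in> P. u < c}. c \<le> d"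
    unfolding c_def using Min_in by auto
  with assms show thesis by (intro that[of c]) (auto simp: gaps_def)
qed

lemma gaps_within_split_first:
  assumes "(u, c) \<in> gaps P" "c \<le> w"
  shows "gaps_within P u w = insert (u, c) (gaps_within P c w)"
proof (intro set_eqI iffI)
  fix p assume p: "p \<in> gaps_within P u w"
  obtain a b where [simp]: "p = (a, b)" by fastforce
  show "p \<in> insert (u, c) (gaps_within P c w)"
  proof (cases "a = u")
    case True
    then show ?thesis using p assms gaps_same_left_end by (auto simp: gaps_within_def)
  next
    case False
    then have "c \<le> a" using p assms by (force simp: gaps_within_def gaps_def)
    then show ?thesis using p by (auto simp: gaps_within_def)
  qed
qed (use assms in \<open>auto simp: gaps_within_def gaps_def\<close>)

lemma sum_gaps_within:
  assumes "finite P" "u \<in> P" "w \<in> P" "u \<le> w"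
  shows "(\<Sum>(a, b)\<in>gaps_within P u w. b - a) = w - u"
  using assms
proof (induction "card {c \<in> P. u < c}" arbitrary: u rule: less_induct)
  case less
  show ?case
  proof (cases "u = w")
    case True
    then have "gaps_within P u w = {}" by (auto simp: gaps_within_def gaps_def)
    then show ?thesis using True by simp
  next
    case False
    with less.prems obtain c where c: "(u, c) \<in> gaps P" "c \<le> w"
      by (metis obtain_next_gap order_le_less)
    then have "u < c" "c \<in> P" by (auto simp: gaps_def)
    then have "card {d \<in> P. c < d} < card {d \<in> P. u < d}"
      using less.prems(1) by (intro psubset_card_mono) auto
    then have "(\<Sum>(a, b)\<in>gaps_within P c w. b - a) = w - c"
      using less c \<open>c \<in> P\<close> by blast
    moreover have "(u, c) \<notin> gaps_within P c w"
      using \<open>u < c\<close> by (simp add: gaps_within_def)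
    ultimately show ?thesis
      using gaps_within_split_first[OF c] finite_gaps_within[OF less.prems(1)] by simp
  qed
qed

lemma card_gaps_within_less:
  assumes "finite P" "w \<in> P"
  shows "card (gaps_within P u w) < card P"
proof -
  have "card (gaps_within P u w) = card (fst ` gaps_within P u w)"
    by (intro card_image[symmetric] inj_on_subset[OF inj_on_fst_gaps]) (auto simp: gaps_within_def)
  also have "\<dots> \<le> card (P - {w})"
    using assms by (intro card_mono) (auto simp: gaps_within_def gaps_def)
  also have "\<dots> < card P"
    using assms by (rule card_Diff1_less)
  finally show ?thesis .
qed

lemma sum_squares_gaps_within_le:
  assumes "finite P" "u \<in> P" "w \<in> P" "u \<le> w"
  shows "(\<Sum>(a, b)\<in>gaps_within P u w. (b - a)^2) \<le> (w - u)^2"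
  using sum_squares_le_square_sum[of "gaps_within P u w" "\<lambda>(a, b). b - a"]
    sum_gaps_within[OF assms]
  by (auto simp: gaps_within_def gaps_def case_prod_beta)

lemma square_le_card_sum_squares_gaps:
  assumes "finite P" "u \<in> P" "w \<in> P" "u \<le> w"
  shows "(w - u)^2 \<le> (real (card P) - 1) * (\<Sum>(a, b)\<in>gaps P. (b - a)^2)"
proof -
  let ?W = "gaps_within P u w"
  have "(w - u)^2 = (\<Sum>(a, b)\<in>?W. (b - a) * 1)^2"
    using sum_gaps_within[OF assms] by simp
  also have "\<dots> \<le> (\<Sum>(a, b)\<in>?W. (b - a)^2) * (\<Sum>(a, b)\<in>?W. 1^2)"
    using Cauchy_Schwarz_ineq_sum[of "\<lambda>(a, b). b - a" "\<lambda>_. 1" ?W]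
    by (simp add: case_prod_beta)
  also have "\<dots> \<le> (\<Sum>(a, b)\<in>gaps P. (b - a)^2) * (real (card P) - 1)"
  proof (rule mult_mono)
    show "(\<Sum>(a, b)\<in>?W. (b - a)^2) \<le> (\<Sum>(a, b)\<in>gaps P. (b - a)^2)"
      using finite_gaps[OF assms(1)] by (intro sum_mono2) (auto simp: gaps_within_def)
    show "(\<Sum>(a, b)\<in>?W. 1^2) \<le> real (card P) - 1"
      using card_gaps_within_less[OF assms(1,3), of u] by (simp add: case_prod_beta)
  qed (auto intro: sum_nonneg)
  finally show ?thesis by (simp add: mult.commute)
qed

lemma intervals_all_eq_Sigma: "intervals_all V = (SIGMA i:UNIV. gaps (proj V i))"
  unfolding intervals_all_def gaps_def by auto

lemma finite_proj: "finite V \<Longrightarrow> finite (proj V i)"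
  unfolding proj_def by simp

lemma finite_intervals_all: "finite V \<Longrightarrow> finite (intervals_all V)"
  unfolding intervals_all_eq_Sigma by (intro finite_SigmaI finite_gaps finite_proj) auto

lemma L2_eq_sum_coordinates:
  "finite V \<Longrightarrow> L2 V = (\<Sum>i\<in>UNIV. \<Sum>(a, b)\<in>gaps (proj V i). (b - a)^2)"
  unfolding L2_def intervals_all_eq_Sigma
  by (subst sum.Sigma) (auto intro: finite_gaps finite_proj)

lemma L2_nonneg: "0 \<le> L2 V"
  unfolding L2_def by (auto intro: sum_nonneg)

lemma dist_power2_le_L2:
  assumes "finite V" "x \<in> V" "y \<in> V"
  shows "(norm (x - y))^2 \<le> (real (card V) - 1) * L2 V"
proof -
  have coordinate:
    "(x $ i - y $ i)^2 \<le> (real (card V) - 1) * (\<Sum>(a, b)\<in>gaps (proj V i). (b - a)^2)" for i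
  proof -
    let ?P = "proj V i"
    have "(x $ i - y $ i)^2 = (max (x $ i) (y $ i) - min (x $ i) (y $ i))^2"
      by (auto simp: max_def min_def power2_commute)
    also have "\<dots> \<le> (real (card ?P) - 1) * (\<Sum>(a, b)\<in>gaps ?P. (b - a)^2)"
      using assms by (intro square_le_card_sum_squares_gaps finite_proj)
        (auto simp: proj_def max_def min_def)
    also have "\<dots> \<le> (real (card V) - 1) * (\<Sum>(a, b)\<in>gaps ?P. (b - a)^2)"
      using card_image_le[OF assms(1), of "\<lambda>v. v $ i"]
      by (intro mult_right_mono) (auto simp: proj_def intro: sum_nonneg)
    finally show ?thesis .
  qed
  have "(norm (x - y))^2 = (\<Sum>i\<in>UNIV. (x $ i - y $ i)^2)"
    by (simp add: power2_norm_vec)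
  also have "\<dots> \<le> (\<Sum>i\<in>UNIV. (real (card V) - 1) * (\<Sum>(a, b)\<in>gaps (proj V i). (b - a)^2))"
    by (intro sum_mono coordinate)
  also have "\<dots> = (real (card V) - 1) * L2 V"
    by (simp add: L2_eq_sum_coordinates[OF assms(1)] sum_distrib_left)
  finally show ?thesis .
qed

lemma Delta_attained:
  assumes "finite V" "V \<noteq> {}"
  obtains x y where "x \<in> V" "y \<in> V" "Delta V = (norm (x - y))^2"
proof -
  have "{(norm (x - y))^2 | x y. x \<in> V \<and> y \<in> V} = (\<lambda>(x, y). (norm (x - y))^2) ` (V \<times> V)"
    by auto
  then have "Delta V \<in> (\<lambda>(x, y). (norm (x - y))^2) ` (V \<times> V)"
    unfolding Delta_def using assms by (auto intro!: Max_in)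
  then show thesis using that by auto
qed

lemma Delta_nonneg:
  assumes "finite V" "V \<noteq> {}"
  shows "0 \<le> Delta V"
  by (metis Delta_attained[OF assms] zero_le_power2)

lemma Delta_le_L2:
  assumes "finite V" "V \<noteq> {}"
  shows "Delta V \<le> (real (card V) - 1) * L2 V"
  by (metis Delta_attained[OF assms] dist_power2_le_L2[OF assms(1)])

definition intervals_between ::
    "(real^'d) set \<Rightarrow> real^'d \<Rightarrow> real^'d \<Rightarrow> ('d \<times> (real \<times> real)) set" where
  "intervals_between V x y = {(i, (a, b)) \<in> intervals_all V.
      min (x $ i) (y $ i) \<le> a \<and> b \<le> max (x $ i) (y $ i)}"

lemma removed_eq_UN:
  "removed k V = (\<Union>(x, y)\<in>{(x, y). close_pair k V x y}. intervals_between V x y)"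
  unfolding removed_def intervals_between_def by auto

lemma sum_intervals_between_le:
  assumes "finite V" "x \<in> V" "y \<in> V"
  shows "(\<Sum>(i, (a, b))\<in>intervals_between V x y. (b - a)^2) \<le> (norm (x - y))^2"
proof -
  let ?lo = "\<lambda>i. min (x $ i) (y $ i)" and ?hi = "\<lambda>i. max (x $ i) (y $ i)"
  have "intervals_between V x y = (SIGMA i:UNIV. gaps_within (proj V i) (?lo i) (?hi i))"
    unfolding intervals_between_def intervals_all_eq_Sigma gaps_within_def by auto
  then have "(\<Sum>(i, (a, b))\<in>intervals_between V x y. (b - a)^2)
      = (\<Sum>i\<in>UNIV. \<Sum>(a, b)\<in>gaps_within (proj V i) (?lo i) (?hi i). (b - a)^2)"
    using assms(1) by (simp add: sum.Sigma finite_gaps_within finite_proj)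
  also have "\<dots> \<le> (\<Sum>i\<in>UNIV. (?hi i - ?lo i)^2)"
    using assms by (intro sum_mono sum_squares_gaps_within_le finite_proj)
      (auto simp: proj_def min_def max_def)
  also have "\<dots> = (norm (x - y))^2"
    by (auto simp: power2_norm_vec max_def min_def power2_commute intro: sum.cong)
  finally show ?thesis .
qed

lemma sum_removed_le:
  assumes "finite V" "V \<noteq> {}"
  shows "(\<Sum>(i, (a, b))\<in>removed k V. (b - a)^2) \<le> real (card V)^2 * (Delta V / real k ^ 4)"
proof -
  let ?C = "{(x, y). close_pair k V x y}"
  have C: "?C \<subseteq> V \<times> V" by (auto simp: close_pair_def)
  have "finite ?C" using C assms finite_subset by blast
  have "(\<Sum>(i, (a, b))\<in>removed k V. (b - a)^2)
      \<le> (\<Sum>c\<in>?C. \<Sum>(i, (a, b))\<in>(\<lambda>(x, y). intervals_between V x y) c. (b - a)^2)"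
    unfolding removed_eq_UN using \<open>finite ?C\<close> assms(1)
    by (intro sum_UN_le)
      (auto simp: intervals_between_def intro: finite_subset[OF _ finite_intervals_all])
  also have "\<dots> \<le> (\<Sum>c\<in>?C. Delta V / real k ^ 4)"
  proof (rule sum_mono, clarify)
    fix x y assume "close_pair k V x y"
    then show "(\<Sum>(i, (a, b))\<in>intervals_between V x y. (b - a)^2) \<le> Delta V / real k ^ 4"
      using sum_intervals_between_le[OF assms(1)] unfolding close_pair_def by force
  qed
  also have "\<dots> = real (card ?C) * (Delta V / real k ^ 4)"
    by simp
  also have "\<dots> \<le> real (card V)^2 * (Delta V / real k ^ 4)"
  proof (rule mult_right_mono)
    have "card ?C \<le> card V ^ 2"
      using card_mono[OF _ C] assms(1) by (simp add: card_cartesian_product power2_eq_square)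
    then show "real (card ?C) \<le> real (card V)^2"
      by (metis of_nat_le_iff of_nat_power)
    show "0 \<le> Delta V / real k ^ 4"
      using Delta_nonneg[OF assms] by simp
  qed
  finally show ?thesis .
qed

lemma L2'_eq_L2_minus_removed:
  assumes "finite V"
  shows "L2' k V = L2 V - (\<Sum>(i, (a, b))\<in>removed k V. (b - a)^2)"
  unfolding L2'_def L2_def using finite_intervals_all[OF assms]
  by (intro sum_diff) (auto simp: removed_def)

lemma pred_div_square_le_half: "(real k - 1) / (real k)^2 \<le> 1 / 2"
proof (cases "k = 0")
  case False
  have "0 \<le> (real k - 1)^2" by simp
  with False show ?thesis by (simp add: field_simps power2_eq_square)
qed simp

theorem proposition4p4:
  fixes U V :: "(real^'d) set" and k :: nat
  assumes "k \<ge> 2" and "finite U" and "card U = k" and "V \<subseteq> U" and "card V \<ge> 2"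
  shows "L2' k V \<ge> L2 V / 2"
proof -
  have V: "finite V" "V \<noteq> {}" using assms finite_subset by fastforce+
  have card_V: "real (card V) \<le> real k" using card_mono[OF assms(2,4)] assms(3) by simp
  have k: "0 < real k" using assms(1) by simp
  have "(\<Sum>(i, (a, b))\<in>removed k V. (b - a)^2) \<le> real (card V)^2 * (Delta V / real k ^ 4)"
    by (rule sum_removed_le[OF V])
  also have "\<dots> \<le> real k ^ 2 * (Delta V / real k ^ 4)"
    using card_V Delta_nonneg[OF V] by (intro mult_right_mono power_mono) auto
  also have "\<dots> = Delta V / real k ^ 2"
    using k by (simp add: power2_eq_square eval_nat_numeral)
  also have "\<dots> \<le> (real k - 1) * L2 V / real k ^ 2"
    using Delta_le_L2[OF V] mult_right_mono[OF _ L2_nonneg, of "real (card V) - 1" "real k - 1" V]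
      card_V
    by (intro divide_right_mono) auto
  also have "\<dots> = (real k - 1) / real k ^ 2 * L2 V"
    by simp
  also have "\<dots> \<le> L2 V / 2"
    using mult_right_mono[OF pred_div_square_le_half L2_nonneg] by simp
  finally show ?thesis
    unfolding L2'_eq_L2_minus_removed[OF V(1)] by simp
qed

end
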